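(* Fix $q\in[0,1]$, an odd positive integer $\tau$, and parameters $x(z,T)\in[0,1)$ for $z\in\mathbb Z$, $T\in\{1,\dots,\tau\}$ with $z\equiv T \pmod 2$. For $T\in\{1,\dots,\tau\}$ let $\mathcal L_T$ denote the random operation on configurations $\mathcal L_T=\prod_{z\equiv T \ (\mathrm{mod}\ 2)} W_{(z,z+1),x(z,T)}$ (the factors act on disjoint pairs of sites and commute; they are applied independently). Let $s_1,\dots,s_k$ be a finite sequence of transpositions of neighboring integers. Process 1: start from $\eta(z)=z$, $z\in\mathbb Z$; apply $W_{s_1,1},\dots,W_{s_k,1}$ in this order; then apply $\mathcal L_1,\mathcal L_2,\dots,\mathcal L_\tau$ in this order. Let $\eta_1$ be the resulting random configuration. Process 2: start from $\eta(z)=z$, $z\in\mathbb Z$; apply $\mathcal L_\tau,\mathcal L_{\tau-1},\dots,\mathcal L_1$ in this order (i.e., run the same discrete-time dynamics with time-reversed inhomogeneity parameters); then apply $W_{s_k,1},W_{s_{k-1},1},\dots,W_{s_1,1}$ in this order. Let $\eta_2$ be the resulting random configuration. Then $\eta_1$ and $\eta_2$ are (almost surely) bijections $\mathbb Z\to\mathbb Z$, and $\eta_1$ has the same distribution as the inverse bijection $\eta_2^{-1}$.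
   Context: A configuration is a map $\eta:\mathbb Z\to\mathbb Z\cup\{+\infty\}$; $\eta(z)$ is the color of the particle at site $z$. For $z\in\mathbb Z$ let $\sigma_{(z,z+1)}$ exchange the values $\eta(z)$ and $\eta(z+1)$. For $x\in[0,1]$ the random asymmetric swap $W_{(z,z+1),x}$ maps $\eta$ to: $\sigma_{(z,z+1)}\eta$ with probability $x$ and $\eta$ with probability $1-x$ if $\eta(z)<\eta(z+1)$; $\sigma_{(z,z+1)}\eta$ with probability $qx$ and $\eta$ with probability $1-qx$ if $\eta(z)>\eta(z+1)$; $\eta$ with probability 1 if $\eta(z)=\eta(z+1)$. This discrete-time dynamics (step $T$ applies $\mathcal L_T$) is the colored stochastic six vertex model with inhomogeneities $x(z,T)$. *)

theory Defs
  imports "HOL-Probability.Probability"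
begin

text \<open>Configurations (colors in int suffice: starting from the identity, no +infinity appears).\<close>
type_synonym conf = "int \<Rightarrow> int"

definition swap_conf :: "int \<Rightarrow> conf \<Rightarrow> conf" where
  "swap_conf z \<eta> = \<eta>(z := \<eta> (z+1), z+1 := \<eta> z)"

text \<open>Random asymmetric swap W_{(z,z+1),x}, realised with a uniform [0,1] variable u:
  swap with probability x if eta z < eta (z+1), with probability q x if eta z > eta (z+1).\<close>
definition W_step :: "real \<Rightarrow> real \<Rightarrow> int \<Rightarrow> real \<Rightarrow> conf \<Rightarrow> conf" where
  "W_step q x z u \<eta> =
     (if \<eta> z < \<eta> (z+1) then (if u < x then swap_conf z \<eta> else \<eta>)
      else if \<eta> (z+1) < \<eta> z then (if u < q * x then swap_conf z \<eta> else \<eta>)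
      else \<eta>)"

text \<open>L_T: product of independent swaps W_{(z,z+1),x(z,T)} over all z with z = T mod 2,
  using uniform variables U z T. Site y lies in the pair with left endpoint
  y (if y = T mod 2) or y-1 (otherwise).\<close>
definition L_step :: "real \<Rightarrow> (int \<Rightarrow> nat \<Rightarrow> real) \<Rightarrow> nat \<Rightarrow> (int \<Rightarrow> nat \<Rightarrow> real) \<Rightarrow> conf \<Rightarrow> conf" where
  "L_step q x T U \<eta> = (\<lambda>y. let z = (if y mod 2 = int T mod 2 then y else y - 1)
                            in W_step q (x z T) z (U z T) \<eta> y)"

text \<open>Randomness: omega (Inl i) drives the i-th swap W_{s_i,1}, omega (Inr (z,T)) drives
  the swap at (z,z+1) inside L_T. Transposition s_i = (a, a+1) is encoded by a = s ! i.\<close>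
definition Vvar :: "(nat + int \<times> nat \<Rightarrow> real) \<Rightarrow> nat \<Rightarrow> real" where
  "Vvar \<omega> i = \<omega> (Inl i)"

definition Uvar :: "(nat + int \<times> nat \<Rightarrow> real) \<Rightarrow> int \<Rightarrow> nat \<Rightarrow> real" where
  "Uvar \<omega> z T = \<omega> (Inr (z, T))"

definition process1 :: "real \<Rightarrow> (int \<Rightarrow> nat \<Rightarrow> real) \<Rightarrow> nat \<Rightarrow> int list \<Rightarrow> (nat + int \<times> nat \<Rightarrow> real) \<Rightarrow> conf" where
  "process1 q x \<tau> s \<omega> =
     (let \<eta>' = foldl (\<lambda>\<eta> (i, a). W_step q 1 a (Vvar \<omega> i) \<eta>) (\<lambda>z. z) (zip [0..<length s] s)
      in foldl (\<lambda>\<eta> T. L_step q x T (Uvar \<omega>) \<eta>) \<eta>' [1..<Suc \<tau>])"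

definition process2 :: "real \<Rightarrow> (int \<Rightarrow> nat \<Rightarrow> real) \<Rightarrow> nat \<Rightarrow> int list \<Rightarrow> (nat + int \<times> nat \<Rightarrow> real) \<Rightarrow> conf" where
  "process2 q x \<tau> s \<omega> =
     (let \<eta>' = foldl (\<lambda>\<eta> T. L_step q x T (Uvar \<omega>) \<eta>) (\<lambda>z. z) (rev [1..<Suc \<tau>])
      in foldl (\<lambda>\<eta> (i, a). W_step q 1 a (Vvar \<omega> i) \<eta>) \<eta>' (rev (zip [0..<length s] s)))"

definition unif_space :: "(nat + int \<times> nat \<Rightarrow> real) measure" where
  "unif_space = PiM UNIV (\<lambda>_. uniform_measure lborel {0..1::real})"

definition conf_space :: "conf measure" where
  "conf_space = PiM UNIV (\<lambda>_. count_space (UNIV :: int set))"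

end

theory Submission
  imports Defs
begin

text \<open>
  On bijections, the swap at the pair \<open>(z, z+1)\<close> multiplies \<open>\<eta>\<close> on the right by the
  transposition \<open>(z z+1)\<close>, with a probability depending only on whether \<open>\<eta>\<close> increases across
  \<open>z\<close>; seen through \<open>\<eta>\<^sup>-\<^sup>1\<close> it multiplies on the left, exchanging the values \<open>a, a+1\<close>.
  A right swap at positions \<open>z, z+1\<close> and a left swap at values \<open>a, a+1\<close> commute in law: they
  interact only when \<open>\<eta>\<close> maps \<open>{z, z+1}\<close> onto \<open>{a, a+1}\<close>, and then both move between \<open>\<eta>\<close> and
  \<open>\<eta> \<circ> (z z+1)\<close> with rates whose cross products agree. At the identity left and right swaps
  coincide, so the law of a word of swaps applied to the identity is the law of the inverse of
  the reversed word. Both processes are local: on a finite window they coincide with such a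
  finite word driven by distinct independent uniform variables, so the finite-dimensional
  marginals of \<open>\<eta>\<^sub>1\<close> and \<open>\<eta>\<^sub>2\<^sup>-\<^sup>1\<close> agree.
\<close>

section \<open>Swaps as multiplication by adjacent transpositions\<close>

abbreviation adj_transp :: "int \<Rightarrow> int \<Rightarrow> int" where
  "adj_transp z \<equiv> Transposition.transpose z (z + 1)"

definition swap_rate :: "real \<Rightarrow> real \<Rightarrow> int \<Rightarrow> conf \<Rightarrow> real" where
  "swap_rate q x z \<eta> = (if \<eta> z < \<eta> (z + 1) then x else if \<eta> (z + 1) < \<eta> z then q * x else 0)"

lemma W_step_eq: "W_step q x z u \<eta> = (if u < swap_rate q x z \<eta> then \<eta> \<circ> adj_transp z else \<eta>)"
  by (auto simp: W_step_def swap_rate_def swap_conf_def Transposition.transpose_def fun_eq_iff)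

lemma swap_rate_bounds:
  "0 \<le> q \<Longrightarrow> q \<le> 1 \<Longrightarrow> 0 \<le> x \<Longrightarrow> x \<le> 1 \<Longrightarrow> 0 \<le> swap_rate q x z \<eta> \<and> swap_rate q x z \<eta> \<le> 1"
  by (auto simp: swap_rate_def mult_le_one)

lemma adj_transp_less_iff:
  "\<not> (p = a \<and> p' = a + 1) \<Longrightarrow> \<not> (p = a + 1 \<and> p' = a) \<Longrightarrow> adj_transp a p < adj_transp a p' \<longleftrightarrow> p < p'"
  by (auto simp: Transposition.transpose_def)

lemma swap_rate_transp_comp:
  assumes "\<not> (\<pi> z = a \<and> \<pi> (z + 1) = a + 1)" "\<not> (\<pi> z = a + 1 \<and> \<pi> (z + 1) = a)"
  shows "swap_rate q x z (adj_transp a \<circ> \<pi>) = swap_rate q x z \<pi>"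
  using adj_transp_less_iff[of "\<pi> z" a "\<pi> (z + 1)"] adj_transp_less_iff[of "\<pi> (z + 1)" a "\<pi> z"] assms
  by (auto simp: swap_rate_def)

lemma swap_rate_inv_comp_transp:
  assumes "bij \<pi>" "\<not> (\<pi> z = a \<and> \<pi> (z + 1) = a + 1)" "\<not> (\<pi> z = a + 1 \<and> \<pi> (z + 1) = a)"
  shows "swap_rate q y a (inv (\<pi> \<circ> adj_transp z)) = swap_rate q y a (inv \<pi>)"
proof -
  have "inv (\<pi> \<circ> adj_transp z) = adj_transp z \<circ> inv \<pi>"
    using assms(1) by (simp add: o_inv_distrib)
  moreover have "\<not> (inv \<pi> a = z \<and> inv \<pi> (a + 1) = z + 1)" "\<not> (inv \<pi> a = z + 1 \<and> inv \<pi> (a + 1) = z)"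
    using assms by (metis bij_inv_eq_iff)+
  ultimately show ?thesis
    by (simp add: swap_rate_transp_comp)
qed

section \<open>Laws of words of swaps\<close>

definition toggle_pmf :: "real \<Rightarrow> 'a \<Rightarrow> 'a \<Rightarrow> 'a pmf" where
  "toggle_pmf p u v = map_pmf (\<lambda>b. if b then v else u) (bernoulli_pmf p)"

lemma set_pmf_toggle_pmf: "set_pmf (toggle_pmf p u v) \<subseteq> {u, v}"
  by (auto simp: toggle_pmf_def)

lemma map_pmf_toggle_pmf: "map_pmf f (toggle_pmf p u v) = toggle_pmf p (f u) (f v)"
  unfolding toggle_pmf_def pmf.map_comp by (intro map_pmf_cong) auto

lemma measure_toggle_pmf_bind:
  assumes "0 \<le> p" "p \<le> 1"
  shows "measure_pmf.prob (toggle_pmf p u v \<bind> f) B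
       = p * measure_pmf.prob (f v) B + (1 - p) * measure_pmf.prob (f u) B"
proof -
  have "ennreal (measure_pmf.prob (toggle_pmf p u v \<bind> f) B)
      = ennreal (p * measure_pmf.prob (f v) B + (1 - p) * measure_pmf.prob (f u) B)"
    using assms
    by (simp add: toggle_pmf_def measure_pmf.emeasure_eq_measure[symmetric] ennreal_mult
                  ennreal_plus[symmetric] mult.commute)
  then show ?thesis
    using assms by (subst (asm) ennreal_inj) auto
qed

lemma pmf_toggle_pmf_bind:
  "0 \<le> p \<Longrightarrow> p \<le> 1 \<Longrightarrow> pmf (toggle_pmf p u v \<bind> f) i = p * pmf (f v) i + (1 - p) * pmf (f u) i"
  using measure_toggle_pmf_bind[of p u v f "{i}"] by (simp add: measure_pmf_single)

lemma pmf_toggle_pmf: "0 \<le> p \<Longrightarrow> p \<le> 1 \<Longrightarrow> pmf (toggle_pmf p u v) i = p * indicator {v} i + (1 - p) * indicator {u} i"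
  using pmf_toggle_pmf_bind[of p u v return_pmf i] by (auto simp: bind_return_pmf' indicator_def)

lemma toggle_pmf_square_commute:
  assumes "K u = toggle_pmf \<alpha> u v" "K w = toggle_pmf \<alpha> w t"
    and "L u = toggle_pmf \<beta> u w" "L v = toggle_pmf \<beta> v t"
  shows "K u \<bind> L = L u \<bind> K"
proof -
  have "K u \<bind> L = bernoulli_pmf \<alpha> \<bind> (\<lambda>b. bernoulli_pmf \<beta> \<bind> (\<lambda>c.
          return_pmf (if c then (if b then t else w) else (if b then v else u))))"
    unfolding assms(1) toggle_pmf_def map_pmf_def bind_assoc_pmf bind_return_pmf
    by (intro bind_pmf_cong refl) (simp add: assms(3,4) toggle_pmf_def map_pmf_def bind_assoc_pmf bind_return_pmf)
  also have "\<dots> = bernoulli_pmf \<beta> \<bind> (\<lambda>c. bernoulli_pmf \<alpha> \<bind> (\<lambda>b.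
          return_pmf (if b then (if c then t else v) else (if c then w else u))))"
    by (subst bind_commute_pmf) (auto intro!: bind_pmf_cong)
  also have "\<dots> = L u \<bind> K"
    unfolding assms(3) toggle_pmf_def map_pmf_def bind_assoc_pmf bind_return_pmf
    by (intro bind_pmf_cong refl) (simp add: assms(1,2) toggle_pmf_def map_pmf_def bind_assoc_pmf bind_return_pmf)
  finally show ?thesis .
qed

lemma toggle_pmf_two_state_commute:
  assumes "u \<noteq> v"
    and "K u = toggle_pmf \<alpha> u v" "K v = toggle_pmf \<alpha>' v u"
    and "L u = toggle_pmf \<beta> u v" "L v = toggle_pmf \<beta>' v u"
    and "\<alpha> * \<beta>' = \<beta> * \<alpha>'"
    and "\<alpha> \<in> {0..1}" "\<alpha>' \<in> {0..1}" "\<beta> \<in> {0..1}" "\<beta>' \<in> {0..1}"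
  shows "K u \<bind> L = L u \<bind> K"
proof (rule pmf_eqI)
  fix i
  show "pmf (K u \<bind> L) i = pmf (L u \<bind> K) i"
    using assms by (cases "i = u"; cases "i = v") (auto simp: pmf_toggle_pmf_bind pmf_toggle_pmf algebra_simps)
qed

definition swap_right :: "real \<Rightarrow> real \<Rightarrow> int \<Rightarrow> conf \<Rightarrow> conf pmf" where
  "swap_right q x z \<eta> = toggle_pmf (swap_rate q x z \<eta>) \<eta> (\<eta> \<circ> adj_transp z)"

definition swap_left :: "real \<Rightarrow> real \<Rightarrow> int \<Rightarrow> conf \<Rightarrow> conf pmf" where
  "swap_left q x a \<pi> = toggle_pmf (swap_rate q x a (inv \<pi>)) \<pi> (adj_transp a \<circ> \<pi>)"

lemma adj_transp_comp_linked:
  assumes "bij \<pi>" "(\<pi> z = a \<and> \<pi> (z + 1) = a + 1) \<or> (\<pi> z = a + 1 \<and> \<pi> (z + 1) = a)"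
  shows "adj_transp a \<circ> \<pi> = \<pi> \<circ> adj_transp z"
proof
  fix w
  show "(adj_transp a \<circ> \<pi>) w = (\<pi> \<circ> adj_transp z) w"
    using assms bij_is_inj[OF assms(1)] injD[of \<pi> w z] injD[of \<pi> w "z + 1"]
    by (auto simp: Transposition.transpose_def)
qed

text \<open>Both products equal \<open>q x y\<close>: exactly one of \<open>\<pi>\<close> and \<open>\<pi> \<circ> (z z+1)\<close> increases across \<open>z\<close>.\<close>
lemma swap_rate_linked_cross:
  assumes "bij \<pi>" "(\<pi> z = a \<and> \<pi> (z + 1) = a + 1) \<or> (\<pi> z = a + 1 \<and> \<pi> (z + 1) = a)"
  shows "swap_rate q x z \<pi> * swap_rate q y a (inv (\<pi> \<circ> adj_transp z))
       = swap_rate q y a (inv \<pi>) * swap_rate q x z (\<pi> \<circ> adj_transp z)"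
proof -
  have inv_comp: "inv (\<pi> \<circ> adj_transp z) = adj_transp z \<circ> inv \<pi>"
    using assms(1) by (simp add: o_inv_distrib)
  have "inj \<pi>"
    using assms(1) bij_is_inj by blast
  from assms(2) show ?thesis
  proof
    assume \<pi>_up: "\<pi> z = a \<and> \<pi> (z + 1) = a + 1"
    then have "inv \<pi> a = z" "inv \<pi> (a + 1) = z + 1"
      using \<open>inj \<pi>\<close> by (auto simp: inv_f_eq)
    with \<pi>_up show ?thesis
      by (simp add: swap_rate_def inv_comp)
  next
    assume \<pi>_down: "\<pi> z = a + 1 \<and> \<pi> (z + 1) = a"
    then have "inv \<pi> a = z + 1" "inv \<pi> (a + 1) = z"
      using \<open>inj \<pi>\<close> by (auto simp: inv_f_eq)
    with \<pi>_down show ?thesis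
      by (simp add: swap_rate_def inv_comp)
  qed
qed

lemma swap_right_swap_left_commute:
  assumes "bij \<pi>" "0 \<le> q" "q \<le> 1" "0 \<le> x" "x \<le> 1" "0 \<le> y" "y \<le> 1"
  shows "swap_right q x z \<pi> \<bind> swap_left q y a = swap_left q y a \<pi> \<bind> swap_right q x z"
proof (cases "(\<pi> z = a \<and> \<pi> (z + 1) = a + 1) \<or> (\<pi> z = a + 1 \<and> \<pi> (z + 1) = a)")
  case False
  then show ?thesis
    by (intro toggle_pmf_square_commute[where t = "adj_transp a \<circ> \<pi> \<circ> adj_transp z"])
       (auto simp: swap_right_def swap_left_def swap_rate_transp_comp swap_rate_inv_comp_transp assms(1) o_assoc)
next
  case linked: True
  define \<pi>' where "\<pi>' = \<pi> \<circ> adj_transp z"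
  have left_eq: "adj_transp a \<circ> \<pi> = \<pi>'" "adj_transp a \<circ> \<pi>' = \<pi>"
    using adj_transp_comp_linked[OF assms(1) linked]
    by (simp_all add: \<pi>'_def comp_assoc flip: comp_assoc[of "adj_transp a"])
  have right_eq: "\<pi> \<circ> adj_transp z = \<pi>'" "\<pi>' \<circ> adj_transp z = \<pi>"
    by (simp_all add: \<pi>'_def comp_assoc)
  have "\<pi>' \<noteq> \<pi>"
  proof
    assume "\<pi>' = \<pi>"
    then have "\<pi> (z + 1) = \<pi> z"
      by (metis \<pi>'_def comp_apply transpose_apply_first)
    then show False
      using linked by auto
  qed
  then show ?thesis
    using swap_rate_linked_cross[OF assms(1) linked, of q x y] swap_rate_bounds assms(2-7)
    by (intro toggle_pmf_two_state_commute[where v = \<pi>' and \<alpha> = "swap_rate q x z \<pi>"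
          and \<alpha>' = "swap_rate q x z \<pi>'" and \<beta> = "swap_rate q y a (inv \<pi>)" and \<beta>' = "swap_rate q y a (inv \<pi>')"])
       (auto simp: swap_right_def swap_left_def left_eq right_eq simp flip: \<pi>'_def)
qed

lemma bij_of_set_pmf_swap_right: "bij \<eta> \<Longrightarrow> \<eta>' \<in> set_pmf (swap_right q x z \<eta>) \<Longrightarrow> bij \<eta>'"
  using set_pmf_toggle_pmf by (fastforce simp: swap_right_def intro: bij_comp)

lemma map_pmf_inv_swap_right: "bij \<eta> \<Longrightarrow> map_pmf inv (swap_right q x z \<eta>) = swap_left q x z (inv \<eta>)"
  by (simp add: swap_right_def swap_left_def map_pmf_toggle_pmf o_inv_distrib inv_inv_eq)

fun swaps_right :: "real \<Rightarrow> (int \<times> real) list \<Rightarrow> conf \<Rightarrow> conf pmf" where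
  "swaps_right q [] \<eta> = return_pmf \<eta>"
| "swaps_right q ((z, x) # ops) \<eta> = swap_right q x z \<eta> \<bind> swaps_right q ops"

fun swaps_left :: "real \<Rightarrow> (int \<times> real) list \<Rightarrow> conf \<Rightarrow> conf pmf" where
  "swaps_left q [] \<pi> = return_pmf \<pi>"
| "swaps_left q ((a, x) # ops) \<pi> = swap_left q x a \<pi> \<bind> swaps_left q ops"

definition valid_rates :: "real \<Rightarrow> (int \<times> real) list \<Rightarrow> bool" where
  "valid_rates q ops \<longleftrightarrow> 0 \<le> q \<and> q \<le> 1 \<and> (\<forall>(z, x) \<in> set ops. 0 \<le> x \<and> x \<le> 1)"

lemma map_pmf_inv_swaps_right: "bij \<eta> \<Longrightarrow> map_pmf inv (swaps_right q ops \<eta>) = swaps_left q ops (inv \<eta>)"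
proof (induction q ops \<eta> rule: swaps_right.induct)
  case (2 q z x ops \<eta>)
  have "map_pmf inv (swaps_right q ((z, x) # ops) \<eta>) = swap_right q x z \<eta> \<bind> (\<lambda>\<eta>'. map_pmf inv (swaps_right q ops \<eta>'))"
    by (simp add: map_bind_pmf)
  also have "\<dots> = swap_right q x z \<eta> \<bind> (\<lambda>\<eta>'. swaps_left q ops (inv \<eta>'))"
    using 2 bij_of_set_pmf_swap_right by (intro bind_pmf_cong) auto
  also have "\<dots> = swaps_left q ((z, x) # ops) (inv \<eta>)"
    using 2 by (simp add: bind_map_pmf flip: map_pmf_inv_swap_right)
  finally show ?case .
qed simp

lemma swaps_right_swap_left_commute:
  assumes "bij \<pi>" "valid_rates q ops" "0 \<le> y" "y \<le> 1"
  shows "swaps_right q ops \<pi> \<bind> swap_left q y a = swap_left q y a \<pi> \<bind> swaps_right q ops"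
  using assms(1,2)
proof (induction q ops \<pi> rule: swaps_right.induct)
  case (1 q \<pi>)
  then show ?case by (simp add: bind_return_pmf bind_return_pmf')
next
  case (2 q z x ops \<pi>)
  then have rates: "valid_rates q ops" "0 \<le> q" "q \<le> 1" "0 \<le> x" "x \<le> 1"
    by (auto simp: valid_rates_def)
  have "swaps_right q ((z, x) # ops) \<pi> \<bind> swap_left q y a
      = swap_right q x z \<pi> \<bind> (\<lambda>\<pi>'. swaps_right q ops \<pi>' \<bind> swap_left q y a)"
    by (simp add: bind_assoc_pmf)
  also have "\<dots> = swap_right q x z \<pi> \<bind> (\<lambda>\<pi>'. swap_left q y a \<pi>' \<bind> swaps_right q ops)"
    using 2 rates bij_of_set_pmf_swap_right by (intro bind_pmf_cong[OF refl]) auto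
  also have "\<dots> = (swap_right q x z \<pi> \<bind> swap_left q y a) \<bind> swaps_right q ops"
    by (simp add: bind_assoc_pmf)
  also have "\<dots> = (swap_left q y a \<pi> \<bind> swap_right q x z) \<bind> swaps_right q ops"
    using swap_right_swap_left_commute 2 rates assms(3,4) by simp
  also have "\<dots> = swap_left q y a \<pi> \<bind> swaps_right q ((z, x) # ops)"
    unfolding bind_assoc_pmf by (intro bind_pmf_cong) simp_all
  finally show ?case .
qed

lemma swaps_left_snoc: "swaps_left q (ops @ [(a, x)]) \<pi> = swaps_left q ops \<pi> \<bind> swap_left q x a"
proof (induction q ops \<pi> rule: swaps_left.induct)
  case (1 q \<pi>)
  have "swaps_left q [] = return_pmf"
    by (rule ext) simp
  then show ?case
    by (simp add: bind_return_pmf bind_return_pmf')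
qed (simp add: bind_assoc_pmf cong: bind_pmf_cong)

text \<open>At the identity a left swap is a right swap, so the last left swap can be commuted to the front.\<close>
lemma swaps_left_id: "valid_rates q ops \<Longrightarrow> swaps_left q ops id = swaps_right q (rev ops) id"
proof (induction ops rule: rev_induct)
  case (snoc op ops)
  obtain a x where op: "op = (a, x)"
    by fastforce
  have rates: "valid_rates q ops" "0 \<le> x" "x \<le> 1"
    using snoc.prems by (auto simp: valid_rates_def op)
  have "swaps_left q (ops @ [op]) id = swaps_right q (rev ops) id \<bind> swap_left q x a"
    by (simp only: op swaps_left_snoc snoc.IH[OF rates(1)])
  also have "\<dots> = swap_left q x a id \<bind> swaps_right q (rev ops)"
    using rates by (intro swaps_right_swap_left_commute) (auto simp: valid_rates_def)
  also have "\<dots> = swaps_right q (rev (ops @ [op])) id"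
    by (simp add: op swap_left_def swap_right_def)
  finally show ?case .
qed simp

lemma map_pmf_inv_swaps_right_id:
  "valid_rates q ops \<Longrightarrow> map_pmf inv (swaps_right q (rev ops) id) = swaps_right q ops id"
  using map_pmf_inv_swaps_right[of id q "rev ops"] swaps_left_id[of q "rev ops"]
  by (simp add: valid_rates_def)

section \<open>Realisation by independent uniform variables\<close>

abbreviation unif01 :: "real measure" where
  "unif01 \<equiv> uniform_measure lborel {0..1}"

lemma prob_space_unif01: "prob_space unif01"
  by (rule prob_space_uniform_measure) auto

interpretation unif: prob_space unif_space
  unfolding unif_space_def by (intro prob_space_PiM prob_space_unif01)

lemma space_unif_space [simp]: "space unif_space = UNIV"
  by (simp add: unif_space_def space_PiM)

lemma measure_unif01_lessThan:
  assumes "0 \<le> c" "c \<le> 1"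
  shows "measure unif01 {..<c} = c"
proof -
  have "{0..1} \<inter> {..<c} = {0..<c}"
    using assms by auto
  then show ?thesis
    using assms by simp
qed

lemma measure_unif01_atLeast: "0 \<le> c \<Longrightarrow> c \<le> 1 \<Longrightarrow> measure unif01 {c..} = 1 - c"
  by (simp add: Int_commute[of "{0..1}"])

lemma measurable_coordinate: "(\<lambda>w. w k) \<in> unif_space \<rightarrow>\<^sub>M unif01"
  unfolding unif_space_def by (rule measurable_component_singleton) simp

lemma sets_coordinate: "X \<in> sets borel \<Longrightarrow> {w. w k \<in> X} \<in> sets unif_space"
  using measurable_sets[OF measurable_coordinate, of X k] by (simp add: vimage_def)

lemma unif_space_split_coordinate:
  fixes k :: "nat + int \<times> nat"
  defines "P \<equiv> PiM (UNIV - {k}) (\<lambda>_. unif01)"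
  shows "(\<lambda>(r, w). w(k := r)) \<in> unif01 \<Otimes>\<^sub>M P \<rightarrow>\<^sub>M unif_space"
    and "distr (unif01 \<Otimes>\<^sub>M P) unif_space (\<lambda>(r, w). w(k := r)) = unif_space"
proof -
  have "(\<lambda>x. (snd x)(k := fst x)) \<in> unif01 \<Otimes>\<^sub>M P \<rightarrow>\<^sub>M unif_space"
    unfolding unif_space_def by (rule measurable_fun_upd[where J = "UNIV - {k}"]) (auto simp: P_def)
  then show "(\<lambda>(r, w). w(k := r)) \<in> unif01 \<Otimes>\<^sub>M P \<rightarrow>\<^sub>M unif_space"
    by (simp add: case_prod_beta')
  have "insert k (UNIV - {k}) = UNIV"
    by auto
  then show "distr (unif01 \<Otimes>\<^sub>M P) unif_space (\<lambda>(r, w). w(k := r)) = unif_space"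
    using distr_pair_PiM_eq_PiM[of "UNIV - {k}" "\<lambda>_. unif01" k] prob_space_unif01
    by (simp add: P_def unif_space_def)
qed

lemma measure_coordinate_Int:
  assumes E: "E \<in> sets unif_space" and E_indep: "\<And>w r. w(k := r) \<in> E \<longleftrightarrow> w \<in> E"
    and X: "X \<in> sets borel"
  shows "measure unif_space ({w. w k \<in> X} \<inter> E) = measure unif01 X * measure unif_space E"
proof -
  define P where "P = PiM (UNIV - {k}) (\<lambda>_. unif01)"
  define g :: "real \<times> (nat + int \<times> nat \<Rightarrow> real) \<Rightarrow> _" where "g = (\<lambda>(r, w). w(k := r))"
  interpret P: prob_space P
    unfolding P_def by (intro prob_space_PiM prob_space_unif01)
  have g: "g \<in> unif01 \<Otimes>\<^sub>M P \<rightarrow>\<^sub>M unif_space" "distr (unif01 \<Otimes>\<^sub>M P) unif_space g = unif_space"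
    unfolding g_def P_def by (rule unif_space_split_coordinate)+
  define E' where "E' = {w \<in> space P. w(k := 0) \<in> E}"
  have "(\<lambda>w. (id w)(k := (\<lambda>_. 0) w)) \<in> P \<rightarrow>\<^sub>M unif_space"
    unfolding unif_space_def by (rule measurable_fun_upd[where J = "UNIV - {k}"]) (auto simp: P_def)
  from measurable_sets[OF this E] have E': "E' \<in> sets P"
    by (simp add: E'_def vimage_def Int_def conj_commute)
  have E_upd: "w(k := r) \<in> E \<longleftrightarrow> w(k := 0) \<in> E" for w r
    using E_indep[of "w(k := 0)" r] by simp
  have emeasure_Int: "emeasure unif_space ({w. w k \<in> Y} \<inter> E) = emeasure unif01 Y * emeasure P E'"
    if Y: "Y \<in> sets borel" for Y
  proof -
    have "g -` ({w. w k \<in> Y} \<inter> E) \<inter> space (unif01 \<Otimes>\<^sub>M P) = Y \<times> E'"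
      by (auto simp: g_def space_pair_measure E'_def intro: iffD2[OF E_upd] dest: iffD1[OF E_upd])
    moreover have "{w. w k \<in> Y} \<inter> E \<in> sets unif_space"
      using sets_coordinate[OF Y] E by blast
    ultimately show ?thesis
      using emeasure_distr[OF g(1), of "{w. w k \<in> Y} \<inter> E"] Y E'
      by (simp add: g(2) P.emeasure_pair_measure_Times)
  qed
  have "emeasure unif_space E = emeasure P E'"
    using emeasure_Int[of UNIV] by simp
  then show ?thesis
    using emeasure_Int[OF X] by (simp add: measure_def enn2real_mult)
qed

definition run_swaps :: "real \<Rightarrow> ('k \<times> int \<times> real) list \<Rightarrow> ('k \<Rightarrow> real) \<Rightarrow> conf \<Rightarrow> conf" where
  "run_swaps q ops w \<eta> = foldl (\<lambda>\<eta> (k, z, x). W_step q x z (w k) \<eta>) \<eta> ops"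

lemma run_swaps_Nil [simp]: "run_swaps q [] w \<eta> = \<eta>"
  by (simp add: run_swaps_def)

lemma run_swaps_Cons [simp]: "run_swaps q ((k, z, x) # ops) w \<eta> = run_swaps q ops w (W_step q x z (w k) \<eta>)"
  by (simp add: run_swaps_def)

lemma run_swaps_append: "run_swaps q (ops @ ops') w \<eta> = run_swaps q ops' w (run_swaps q ops w \<eta>)"
  by (simp add: run_swaps_def)

lemma run_swaps_fun_upd: "k \<notin> fst ` set ops \<Longrightarrow> run_swaps q ops (w(k := r)) \<eta> = run_swaps q ops w \<eta>"
  by (induction ops arbitrary: \<eta>) auto

lemma run_swaps_Cons_split:
  "{w. run_swaps q ((k, z, x) # ops) w \<eta> \<in> B} =
     {w. w k \<in> {..<swap_rate q x z \<eta>}} \<inter> {w. run_swaps q ops w (\<eta> \<circ> adj_transp z) \<in> B} \<union>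
     {w. w k \<in> {swap_rate q x z \<eta>..}} \<inter> {w. run_swaps q ops w \<eta> \<in> B}"
  by (auto simp: W_step_eq)

lemma sets_run_swaps: "{w. run_swaps q ops w \<eta> \<in> B} \<in> sets unif_space"
proof (induction ops arbitrary: \<eta>)
  case Nil
  then show ?case
    using sets.top[of unif_space] by (cases "\<eta> \<in> B") auto
next
  case (Cons op ops)
  then show ?case
    by (cases op) (simp only: run_swaps_Cons_split, intro sets.Un sets.Int sets_coordinate, simp_all)
qed

lemma measure_run_swaps:
  assumes "distinct (map fst ops)" "valid_rates q (map snd ops)"
  shows "measure unif_space {w. run_swaps q ops w \<eta> \<in> B} = measure_pmf.prob (swaps_right q (map snd ops) \<eta>) B"
  using assms
proof (induction ops arbitrary: \<eta>)
  case Nil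
  then show ?case
    using unif.prob_space sets.top[of unif_space] by (cases "\<eta> \<in> B") auto
next
  case (Cons op ops)
  obtain k z x where op: "op = (k, z, x)"
    by (cases op) auto
  have rates: "valid_rates q (map snd ops)" "0 \<le> q" "q \<le> 1" "0 \<le> x" "x \<le> 1"
    using Cons.prems(2) by (auto simp: valid_rates_def op)
  have fresh: "distinct (map fst ops)" "k \<notin> fst ` set ops"
    using Cons.prems(1) by (auto simp: op)
  define c where "c = swap_rate q x z \<eta>"
  have c: "0 \<le> c" "c \<le> 1"
    using swap_rate_bounds rates by (auto simp: c_def)
  define S1 where "S1 = {w. run_swaps q ops w (\<eta> \<circ> adj_transp z) \<in> B}"
  define S0 where "S0 = {w. run_swaps q ops w \<eta> \<in> B}"
  have S_indep: "w(k := r) \<in> S1 \<longleftrightarrow> w \<in> S1" "w(k := r) \<in> S0 \<longleftrightarrow> w \<in> S0" for w r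
    by (simp_all add: S1_def S0_def run_swaps_fun_upd[OF fresh(2)])
  have S_sets: "S1 \<in> sets unif_space" "S0 \<in> sets unif_space"
    by (simp_all add: S1_def S0_def sets_run_swaps)
  have "measure unif_space {w. run_swaps q (op # ops) w \<eta> \<in> B}
      = measure unif_space ({w. w k \<in> {..<c}} \<inter> S1) + measure unif_space ({w. w k \<in> {c..}} \<inter> S0)"
    unfolding op run_swaps_Cons_split c_def[symmetric] S1_def[symmetric] S0_def[symmetric]
    using S_sets sets_coordinate[of "{..<c}" k] sets_coordinate[of "{c..}" k]
    by (intro unif.finite_measure_Union) auto
  also have "\<dots> = c * measure unif_space S1 + (1 - c) * measure unif_space S0"
    by (simp only: measure_coordinate_Int[OF S_sets(1) S_indep(1)] measure_coordinate_Int[OF S_sets(2) S_indep(2)]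
        measure_unif01_lessThan[OF c] measure_unif01_atLeast[OF c] sets_lborel atLeast_borel lessThan_borel)
  also have "\<dots> = c * measure_pmf.prob (swaps_right q (map snd ops) (\<eta> \<circ> adj_transp z)) B
                 + (1 - c) * measure_pmf.prob (swaps_right q (map snd ops) \<eta>) B"
    using Cons.IH fresh(1) rates(1) by (simp add: S1_def S0_def)
  also have "\<dots> = measure_pmf.prob (swaps_right q (map snd (op # ops)) \<eta>) B"
    using c by (simp add: op swap_right_def c_def measure_toggle_pmf_bind)
  finally show ?case .
qed

section \<open>Locality\<close>

definition pair_start :: "nat \<Rightarrow> int \<Rightarrow> int" where
  "pair_start T y = (if y mod 2 = int T mod 2 then y else y - 1)"

lemma pair_start_cases: "pair_start T y = y \<or> pair_start T y = y - 1"
  by (auto simp: pair_start_def)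

lemma pair_start_parity: "pair_start T y mod 2 = int T mod 2"
  unfolding pair_start_def by presburger

lemma pair_start_eq_iff: "z mod 2 = int T mod 2 \<Longrightarrow> pair_start T y = z \<longleftrightarrow> y = z \<or> y = z + 1"
  unfolding pair_start_def by presburger

lemma same_parity_pairs_disjoint:
  "(a :: int) mod 2 = c mod 2 \<Longrightarrow> b mod 2 = c mod 2 \<Longrightarrow> a \<noteq> b \<Longrightarrow> a \<noteq> b + 1 \<and> a + 1 \<noteq> b"
  by presburger

lemma L_step_eq: "L_step q x T U \<eta> y = W_step q (x (pair_start T y) T) (pair_start T y) (U (pair_start T y) T) \<eta> y"
  by (simp add: L_step_def pair_start_def Let_def)

lemma W_step_outside: "y \<noteq> z \<Longrightarrow> y \<noteq> z + 1 \<Longrightarrow> W_step q x z u \<eta> y = \<eta> y"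
  by (simp add: W_step_eq)

lemma W_step_local:
  "\<eta> z = \<eta>' z \<Longrightarrow> \<eta> (z + 1) = \<eta>' (z + 1) \<Longrightarrow> y = z \<or> y = z + 1 \<Longrightarrow>
    W_step q x z u \<eta> y = W_step q x z u \<eta>' y"
  by (auto simp: W_step_eq swap_rate_def)

definition L_ops :: "(int \<Rightarrow> nat \<Rightarrow> real) \<Rightarrow> nat \<Rightarrow> int list \<Rightarrow> ((nat + int \<times> nat) \<times> int \<times> real) list" where
  "L_ops x T zs = map (\<lambda>z. (Inr (z, T), z, x z T)) zs"

lemma run_swaps_L_ops:
  assumes "distinct zs" "\<forall>z \<in> set zs. z mod 2 = int T mod 2"
  shows "run_swaps q (L_ops x T zs) w \<eta> y =
    (if pair_start T y \<in> set zs
     then W_step q (x (pair_start T y) T) (pair_start T y) (w (Inr (pair_start T y, T))) \<eta> y else \<eta> y)"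
  using assms
proof (induction zs arbitrary: \<eta>)
  case (Cons z zs)
  define p where "p = pair_start T y"
  define \<eta>' where "\<eta>' = W_step q (x z T) z (w (Inr (z, T))) \<eta>"
  have z: "z mod 2 = int T mod 2" "z \<notin> set zs"
    using Cons.prems by auto
  have y: "y = p \<or> y = p + 1"
    using pair_start_cases[of T y] by (auto simp: p_def)
  have "run_swaps q (L_ops x T (z # zs)) w \<eta> y =
    (if p \<in> set zs then W_step q (x p T) p (w (Inr (p, T))) \<eta>' y else \<eta>' y)"
    using Cons by (simp add: L_ops_def \<eta>'_def p_def)
  also have "\<dots> = (if p \<in> set (z # zs) then W_step q (x p T) p (w (Inr (p, T))) \<eta> y else \<eta> y)"
  proof (cases "p = z")
    case False
    then have "p \<noteq> z \<and> p \<noteq> z + 1 \<and> p + 1 \<noteq> z"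
      using same_parity_pairs_disjoint[OF pair_start_parity z(1)] by (auto simp: p_def)
    then have "\<eta>' p = \<eta> p" "\<eta>' (p + 1) = \<eta> (p + 1)" "\<eta>' y = \<eta> y"
      using y by (auto simp: \<eta>'_def W_step_outside)
    then show ?thesis
      using False y by (auto intro: W_step_local)
  qed (simp add: z(2) \<eta>'_def)
  finally show ?case
    by (simp add: p_def)
qed (simp add: L_ops_def)

definition eq_on_window :: "int \<Rightarrow> conf \<Rightarrow> conf \<Rightarrow> bool" where
  "eq_on_window R \<eta> \<eta>' \<longleftrightarrow> (\<forall>y. \<bar>y\<bar> \<le> R \<longrightarrow> \<eta> y = \<eta>' y)"

lemma eq_on_window_refl [simp]: "eq_on_window R \<eta> \<eta>"
  by (simp add: eq_on_window_def)

lemma eq_on_window_mono: "eq_on_window R' \<eta> \<eta>' \<Longrightarrow> R \<le> R' \<Longrightarrow> eq_on_window R \<eta> \<eta>'"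
  by (simp add: eq_on_window_def)

lemma eq_on_window_W_step:
  assumes "eq_on_window (R + 1) \<eta> \<eta>'"
  shows "eq_on_window R (W_step q x z u \<eta>) (W_step q x z u \<eta>')"
  unfolding eq_on_window_def
proof (intro allI impI)
  fix y
  assume "\<bar>y\<bar> \<le> R"
  then show "W_step q x z u \<eta> y = W_step q x z u \<eta>' y"
    using assms by (cases "y = z \<or> y = z + 1") (auto simp: eq_on_window_def W_step_outside intro!: W_step_local)
qed

lemma eq_on_window_run_swaps:
  "eq_on_window (R + int (length ops)) \<eta> \<eta>' \<Longrightarrow> eq_on_window R (run_swaps q ops w \<eta>) (run_swaps q ops w \<eta>')"
proof (induction ops arbitrary: \<eta> \<eta>')
  case (Cons op ops)
  then show ?case
    by (cases op) (simp add: eq_on_window_W_step add_ac)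
qed simp

definition covers_pair_starts :: "int \<Rightarrow> nat \<Rightarrow> int list \<Rightarrow> bool" where
  "covers_pair_starts N T zs \<longleftrightarrow> distinct zs \<and> (\<forall>z \<in> set zs. z mod 2 = int T mod 2) \<and>
     (\<forall>z. \<bar>z\<bar> \<le> N \<and> z mod 2 = int T mod 2 \<longrightarrow> z \<in> set zs)"

lemma eq_on_window_L_step:
  assumes "eq_on_window (R + 1) \<eta> \<eta>'" "R + 1 \<le> N" "covers_pair_starts N T zs"
  shows "eq_on_window R (L_step q x T (Uvar w) \<eta>) (run_swaps q (L_ops x T zs) w \<eta>')"
  unfolding eq_on_window_def
proof (intro allI impI)
  fix y
  assume "\<bar>y\<bar> \<le> R"
  have zs: "distinct zs" "\<forall>z \<in> set zs. z mod 2 = int T mod 2"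
    and covered: "\<And>z. \<bar>z\<bar> \<le> N \<Longrightarrow> z mod 2 = int T mod 2 \<Longrightarrow> z \<in> set zs"
    using assms(3) unfolding covers_pair_starts_def by blast+
  define p where "p = pair_start T y"
  have y: "y = p \<or> y = p + 1"
    using pair_start_cases[of T y] by (auto simp: p_def)
  then have "\<bar>p\<bar> \<le> R + 1" "\<bar>p + 1\<bar> \<le> R + 1"
    using \<open>\<bar>y\<bar> \<le> R\<close> by linarith+
  then have "\<eta> p = \<eta>' p" "\<eta> (p + 1) = \<eta>' (p + 1)"
    using assms(1) unfolding eq_on_window_def by blast+
  then have "W_step q (x p T) p (w (Inr (p, T))) \<eta> y = W_step q (x p T) p (w (Inr (p, T))) \<eta>' y"
    using y by (rule W_step_local)
  moreover have "p \<in> set zs"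
    using covered \<open>\<bar>p\<bar> \<le> R + 1\<close> assms(2) pair_start_parity[of T y] by (simp add: p_def)
  then have "run_swaps q (L_ops x T zs) w \<eta>' y = W_step q (x p T) p (w (Inr (p, T))) \<eta>' y"
    using run_swaps_L_ops[OF zs, of q x w \<eta>' y] unfolding p_def[symmetric] by simp
  ultimately show "L_step q x T (Uvar w) \<eta> y = run_swaps q (L_ops x T zs) w \<eta>' y"
    by (simp add: L_step_eq Uvar_def flip: p_def)
qed

lemma eq_on_window_L_steps:
  assumes "\<forall>T \<in> set Ts. covers_pair_starts N T (zs T)"
    and "eq_on_window (R + int (length Ts)) \<eta> \<eta>'" "R + int (length Ts) \<le> N"
  shows "eq_on_window R (foldl (\<lambda>\<eta> T. L_step q x T (Uvar w) \<eta>) \<eta> Ts)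
           (run_swaps q (concat (map (\<lambda>T. L_ops x T (zs T)) Ts)) w \<eta>')"
  using assms
proof (induction Ts arbitrary: \<eta> \<eta>' R)
  case (Cons T Ts)
  have "eq_on_window (R + int (length Ts)) (L_step q x T (Uvar w) \<eta>) (run_swaps q (L_ops x T (zs T)) w \<eta>')"
    using Cons.prems by (intro eq_on_window_L_step) (auto simp: add_ac)
  then show ?case
    using Cons by (simp add: run_swaps_append)
qed simp

definition s_ops :: "int list \<Rightarrow> ((nat + int \<times> nat) \<times> int \<times> real) list" where
  "s_ops s = map (\<lambda>(i, a). (Inl i, a, 1)) (zip [0..<length s] s)"

definition pair_starts :: "int \<Rightarrow> nat \<Rightarrow> int list" where
  "pair_starts N T = filter (\<lambda>z. z mod 2 = int T mod 2) [-N..N]"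

text \<open>
  Process 1 agrees with this word, and Process 2
  with its reverse, on windows that shrink by at most \<open>\<tau> + |s|\<close>.
\<close>
definition finite_ops :: "(int \<Rightarrow> nat \<Rightarrow> real) \<Rightarrow> nat \<Rightarrow> int list \<Rightarrow> int \<Rightarrow> ((nat + int \<times> nat) \<times> int \<times> real) list" where
  "finite_ops x \<tau> s N = s_ops s @ concat (map (\<lambda>T. L_ops x T (pair_starts N T)) [1..<Suc \<tau>])"

lemma covers_pair_starts: "covers_pair_starts N T (pair_starts N T)"
  by (auto simp: covers_pair_starts_def pair_starts_def)

lemma covers_rev_pair_starts: "covers_pair_starts N T (rev (pair_starts N T))"
  by (auto simp: covers_pair_starts_def pair_starts_def)

lemma distinct_concat_map_pair:
  "distinct Ts \<Longrightarrow> (\<And>T. distinct (zs T)) \<Longrightarrow> distinct (concat (map (\<lambda>T. map (\<lambda>z. (z, T)) (zs T)) Ts))"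
  by (induction Ts) (auto simp: distinct_map inj_on_def)

lemma distinct_finite_ops: "distinct (map fst (finite_ops x \<tau> s N))"
proof -
  have "map fst (s_ops s) = map (Inl \<circ> fst) (zip [0..<length s] s)"
    by (simp add: s_ops_def o_def case_prod_beta)
  also have "\<dots> = map Inl [0..<length s]"
    by (metis length_upt minus_nat.diff_0 map_fst_zip map_map)
  finally have "map fst (s_ops s) = map Inl [0..<length s]" .
  moreover have "map fst (concat (map (\<lambda>T. L_ops x T (pair_starts N T)) [1..<Suc \<tau>]))
      = map Inr (concat (map (\<lambda>T. map (\<lambda>z. (z, T)) (pair_starts N T)) [1..<Suc \<tau>]))"
    by (simp add: L_ops_def map_concat o_def del: upt_Suc)
  moreover have "distinct (concat (map (\<lambda>T. map (\<lambda>z. (z, T)) (pair_starts N T)) [1..<Suc \<tau>]))"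
    by (rule distinct_concat_map_pair) (simp_all add: pair_starts_def)
  ultimately show ?thesis
    unfolding finite_ops_def map_append by (auto simp: distinct_map simp del: upt_Suc)
qed

lemma valid_rates_finite_ops:
  assumes "0 \<le> q" "q \<le> 1"
    and "\<And>z T. 1 \<le> T \<Longrightarrow> T \<le> \<tau> \<Longrightarrow> z mod 2 = int T mod 2 \<Longrightarrow> 0 \<le> x z T \<and> x z T \<le> 1"
  shows "valid_rates q (map snd (finite_ops x \<tau> s N))"
  using assms by (auto simp: valid_rates_def finite_ops_def s_ops_def L_ops_def pair_starts_def set_zip)

lemma foldl_W_step_eq_run_swaps:
  "foldl (\<lambda>\<eta> (i, a). W_step q 1 a (Vvar w i) \<eta>) \<eta> xs = run_swaps q (map (\<lambda>(i, a). (Inl i, a, 1)) xs) w \<eta>"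
  by (induction xs arbitrary: \<eta>) (auto simp: Vvar_def)

lemma process1_eq_L_steps:
  "process1 q x \<tau> s w = foldl (\<lambda>\<eta> T. L_step q x T (Uvar w) \<eta>) (run_swaps q (s_ops s) w id) [1..<Suc \<tau>]"
  by (simp add: process1_def foldl_W_step_eq_run_swaps s_ops_def id_def del: upt_Suc)

lemma process2_eq_run_swaps:
  "process2 q x \<tau> s w = run_swaps q (rev (s_ops s)) w (foldl (\<lambda>\<eta> T. L_step q x T (Uvar w) \<eta>) id (rev [1..<Suc \<tau>]))"
  by (simp add: process2_def foldl_W_step_eq_run_swaps s_ops_def rev_map id_def del: upt_Suc)

lemma process1_eq_on_window:
  "eq_on_window (N - int \<tau>) (process1 q x \<tau> s w) (run_swaps q (finite_ops x \<tau> s N) w id)"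
proof -
  have "eq_on_window (N - int \<tau>) (foldl (\<lambda>\<eta> T. L_step q x T (Uvar w) \<eta>) (run_swaps q (s_ops s) w id) [1..<Suc \<tau>])
      (run_swaps q (concat (map (\<lambda>T. L_ops x T (pair_starts N T)) [1..<Suc \<tau>])) w (run_swaps q (s_ops s) w id))"
    by (rule eq_on_window_L_steps[where N = N]) (simp_all add: covers_pair_starts)
  then show ?thesis
    by (simp add: process1_eq_L_steps finite_ops_def run_swaps_append del: upt_Suc)
qed

lemma rev_finite_ops:
  "rev (finite_ops x \<tau> s N) =
     concat (map (\<lambda>T. L_ops x T (rev (pair_starts N T))) (rev [1..<Suc \<tau>])) @ rev (s_ops s)"
  by (simp add: finite_ops_def rev_concat rev_map L_ops_def o_def)

lemma process2_eq_on_window: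
  "eq_on_window (N - int \<tau> - int (length s)) (process2 q x \<tau> s w) (run_swaps q (rev (finite_ops x \<tau> s N)) w id)"
proof -
  let ?L = "foldl (\<lambda>\<eta> T. L_step q x T (Uvar w) \<eta>) id (rev [1..<Suc \<tau>])"
  let ?F = "run_swaps q (concat (map (\<lambda>T. L_ops x T (rev (pair_starts N T))) (rev [1..<Suc \<tau>]))) w id"
  have "eq_on_window (N - int \<tau>) ?L ?F"
    by (rule eq_on_window_L_steps[where N = N]) (simp_all add: covers_rev_pair_starts)
  then have "eq_on_window (N - int \<tau> - int (length s)) (run_swaps q (rev (s_ops s)) w ?L) (run_swaps q (rev (s_ops s)) w ?F)"
    by (intro eq_on_window_run_swaps) (simp add: s_ops_def)
  then show ?thesis
    by (simp add: process2_eq_run_swaps rev_finite_ops run_swaps_append del: upt_Suc)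
qed

section \<open>Bijectivity and bounded displacement\<close>

definition bounded_perm :: "int \<Rightarrow> (int \<Rightarrow> int) \<Rightarrow> bool" where
  "bounded_perm d \<sigma> \<longleftrightarrow> bij \<sigma> \<and> (\<forall>y. \<bar>\<sigma> y - y\<bar> \<le> d)"

lemma bounded_perm_id: "bounded_perm 0 id"
  by (simp add: bounded_perm_def)

lemma bounded_perm_comp:
  assumes "bounded_perm d \<sigma>" "bounded_perm e \<rho>"
  shows "bounded_perm (d + e) (\<sigma> \<circ> \<rho>)"
proof -
  have "\<bar>\<sigma> (\<rho> y) - y\<bar> \<le> d + e" for y
  proof -
    have "\<bar>\<sigma> (\<rho> y) - \<rho> y\<bar> \<le> d" "\<bar>\<rho> y - y\<bar> \<le> e"
      using assms by (simp_all add: bounded_perm_def)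
    then show ?thesis
      by arith
  qed
  then show ?thesis
    using assms by (auto simp: bounded_perm_def intro: bij_comp)
qed

lemma bounded_perm_adj_transp: "bounded_perm 1 (adj_transp z)"
  by (simp add: bounded_perm_def Transposition.transpose_def)

lemma W_step_right_mult: "\<exists>\<sigma>. bounded_perm 1 \<sigma> \<and> W_step q x z u \<eta> = \<eta> \<circ> \<sigma>"
proof (cases "u < swap_rate q x z \<eta>")
  case True
  then show ?thesis
    using bounded_perm_adj_transp by (auto simp: W_step_eq)
next
  case False
  have "bounded_perm 1 id"
    by (simp add: bounded_perm_def)
  with False show ?thesis
    by (auto simp: W_step_eq)
qed

lemma pair_start_adj_transp: "pair_start T (adj_transp (pair_start T y) y) = pair_start T y"
proof -
  define p where "p = pair_start T y"
  have "y = p \<or> y = p + 1"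
    using pair_start_cases[of T y] by (auto simp: p_def)
  then have "adj_transp p y = p \<or> adj_transp p y = p + 1"
    by auto
  then show ?thesis
    using pair_start_eq_iff[OF pair_start_parity[of T y]] by (simp add: p_def)
qed

lemma L_step_right_mult: "\<exists>\<sigma>. bounded_perm 1 \<sigma> \<and> L_step q x T U \<eta> = \<eta> \<circ> \<sigma>"
proof -
  define swapped where "swapped p \<longleftrightarrow> U p T < swap_rate q (x p T) p \<eta>" for p
  define \<sigma> where "\<sigma> y = (if swapped (pair_start T y) then adj_transp (pair_start T y) y else y)" for y
  have "L_step q x T U \<eta> = \<eta> \<circ> \<sigma>"
    by (simp add: fun_eq_iff L_step_eq W_step_eq \<sigma>_def swapped_def)
  moreover have "\<sigma> \<circ> \<sigma> = id"
    by (simp add: fun_eq_iff \<sigma>_def pair_start_adj_transp)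
  then have "bij \<sigma>"
    using o_bij by blast
  moreover have "\<bar>\<sigma> y - y\<bar> \<le> 1" for y
    using pair_start_cases[of T y] by (auto simp: \<sigma>_def Transposition.transpose_def)
  ultimately show ?thesis
    by (auto simp: bounded_perm_def)
qed

lemma foldl_right_mult:
  assumes "\<And>\<eta> a. \<exists>\<sigma>. bounded_perm 1 \<sigma> \<and> f \<eta> a = \<eta> \<circ> \<sigma>"
  shows "\<exists>\<sigma>. bounded_perm (int (length xs)) \<sigma> \<and> foldl f \<eta> xs = \<eta> \<circ> \<sigma>"
proof (induction xs arbitrary: \<eta>)
  case Nil
  show ?case
    using bounded_perm_id by auto
next
  case (Cons a xs)
  obtain \<sigma> where \<sigma>: "bounded_perm 1 \<sigma>" "f \<eta> a = \<eta> \<circ> \<sigma>"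
    using assms by blast
  obtain \<rho> where \<rho>: "bounded_perm (int (length xs)) \<rho>" "foldl f (\<eta> \<circ> \<sigma>) xs = \<eta> \<circ> \<sigma> \<circ> \<rho>"
    using Cons.IH by blast
  show ?case
    using bounded_perm_comp[OF \<sigma>(1) \<rho>(1)] \<sigma>(2) \<rho>(2) by (auto simp: o_assoc add_ac)
qed

lemma run_swaps_right_mult: "\<exists>\<sigma>. bounded_perm (int (length ops)) \<sigma> \<and> run_swaps q ops w \<eta> = \<eta> \<circ> \<sigma>"
  unfolding run_swaps_def by (rule foldl_right_mult) (simp add: W_step_right_mult split: prod.split)

lemma foldl_L_step_right_mult:
  "\<exists>\<sigma>. bounded_perm (int (length Ts)) \<sigma> \<and> foldl (\<lambda>\<eta> T. L_step q x T U \<eta>) \<eta> Ts = \<eta> \<circ> \<sigma>"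
  by (rule foldl_right_mult) (rule L_step_right_mult)

lemma bij_run_swaps: "bij \<eta> \<Longrightarrow> bij (run_swaps q ops w \<eta>)"
  using run_swaps_right_mult[of ops q w \<eta>] by (auto simp: bounded_perm_def intro: bij_comp)

lemma bij_process1: "bij (process1 q x \<tau> s w)"
proof -
  obtain \<rho> where "bij \<rho>" "process1 q x \<tau> s w = run_swaps q (s_ops s) w id \<circ> \<rho>"
    using foldl_L_step_right_mult[of "[1..<Suc \<tau>]" q x "Uvar w" "run_swaps q (s_ops s) w id"]
    unfolding process1_eq_L_steps bounded_perm_def by blast
  then show ?thesis
    using bij_comp[OF \<open>bij \<rho>\<close> bij_run_swaps[OF bij_id]] by simp
qed

lemma process2_bounded_perm: "bounded_perm (int \<tau> + int (length s)) (process2 q x \<tau> s w)"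
proof -
  let ?\<eta> = "foldl (\<lambda>\<eta> T. L_step q x T (Uvar w) \<eta>) id (rev [1..<Suc \<tau>])"
  obtain \<sigma> where "bounded_perm (int \<tau>) \<sigma>" "?\<eta> = id \<circ> \<sigma>"
    using foldl_L_step_right_mult[of "rev [1..<Suc \<tau>]" q x "Uvar w" id] by (auto simp del: upt_Suc)
  moreover obtain \<rho> where "bounded_perm (int (length s)) \<rho>" "run_swaps q (rev (s_ops s)) w ?\<eta> = ?\<eta> \<circ> \<rho>"
    using run_swaps_right_mult[of "rev (s_ops s)" q w ?\<eta>] by (auto simp: s_ops_def)
  ultimately show ?thesis
    unfolding process2_eq_run_swaps by (simp add: bounded_perm_comp)
qed

lemma bij_process2: "bij (process2 q x \<tau> s w)"
  using process2_bounded_perm by (simp add: bounded_perm_def)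

lemma inv_process2_eq_run_swaps:
  assumes "\<bar>j\<bar> + 2 * (int \<tau> + int (length s)) \<le> N"
  shows "inv (process2 q x \<tau> s w) j = inv (run_swaps q (rev (finite_ops x \<tau> s N)) w id) j"
proof -
  define n where "n = int \<tau> + int (length s)"
  let ?P = "process2 q x \<tau> s w"
  let ?F = "run_swaps q (rev (finite_ops x \<tau> s N)) w id"
  define p where "p = inv ?P j"
  have "?P p = j"
    unfolding p_def by (rule surj_f_inv_f[OF bij_is_surj[OF bij_process2]])
  moreover have "\<bar>?P p - p\<bar> \<le> n"
    using process2_bounded_perm by (simp add: bounded_perm_def n_def)
  ultimately have "\<bar>p\<bar> \<le> N - n"
    using assms[folded n_def] by linarith
  then have "?F p = j"
    using process2_eq_on_window[of N \<tau> s q x w] \<open>?P p = j\<close> by (simp add: eq_on_window_def n_def)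
  then have "inv ?F j = p"
    by (rule inv_f_eq[OF bij_is_inj[OF bij_run_swaps[OF bij_id]]])
  then show ?thesis
    by (simp add: p_def)
qed

section \<open>Equality of the laws\<close>

lemma measurable_run_swaps_apply:
  fixes g :: "conf \<Rightarrow> int"
  shows "(\<lambda>w. g (run_swaps q ops w \<eta>)) \<in> unif_space \<rightarrow>\<^sub>M count_space UNIV"
proof -
  have "{w. g (run_swaps q ops w \<eta>) = a} \<in> sets unif_space" for a
    using sets_run_swaps[of q ops \<eta> "g -` {a}"] by simp
  then show ?thesis
    by (simp add: measurable_count_space_eq2_countable vimage_def)
qed

lemma measurable_conf_space:
  "(\<And>y. (\<lambda>w. P w y) \<in> unif_space \<rightarrow>\<^sub>M count_space UNIV) \<Longrightarrow> P \<in> unif_space \<rightarrow>\<^sub>M conf_space"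
  unfolding conf_space_def by (rule measurable_PiM_single') auto

lemma measurable_process1: "process1 q x \<tau> s \<in> unif_space \<rightarrow>\<^sub>M conf_space"
proof (rule measurable_conf_space)
  fix y
  have "process1 q x \<tau> s w y = run_swaps q (finite_ops x \<tau> s (\<bar>y\<bar> + int \<tau>)) w id y" for w
    using process1_eq_on_window[of "\<bar>y\<bar> + int \<tau>" \<tau> q x s w] by (simp add: eq_on_window_def)
  then show "(\<lambda>w. process1 q x \<tau> s w y) \<in> unif_space \<rightarrow>\<^sub>M count_space UNIV"
    using measurable_run_swaps_apply[of "\<lambda>\<eta>. \<eta> y"] by simp
qed

lemma measurable_inv_process2: "(\<lambda>w. inv (process2 q x \<tau> s w)) \<in> unif_space \<rightarrow>\<^sub>M conf_space"
proof (rule measurable_conf_space)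
  fix y
  let ?N = "\<bar>y\<bar> + 2 * (int \<tau> + int (length s))"
  have "inv (process2 q x \<tau> s w) y = inv (run_swaps q (rev (finite_ops x \<tau> s ?N)) w id) y" for w
    by (rule inv_process2_eq_run_swaps) simp
  then show "(\<lambda>w. inv (process2 q x \<tau> s w) y) \<in> unif_space \<rightarrow>\<^sub>M count_space UNIV"
    using measurable_run_swaps_apply[of "\<lambda>\<eta>. inv \<eta> y"] by simp
qed

lemma measure_process1_eq_measure_inv_process2:
  assumes "0 \<le> q" "q \<le> 1"
    and "\<And>z T. 1 \<le> T \<Longrightarrow> T \<le> \<tau> \<Longrightarrow> z mod 2 = int T mod 2 \<Longrightarrow> 0 \<le> x z T \<and> x z T \<le> 1"
    and local: "\<And>\<eta> \<eta>'. eq_on_window R \<eta> \<eta>' \<Longrightarrow> \<eta> \<in> C \<longleftrightarrow> \<eta>' \<in> C"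
  shows "measure unif_space {w. process1 q x \<tau> s w \<in> C} = measure unif_space {w. inv (process2 q x \<tau> s w) \<in> C}"
proof -
  define N where "N = R + 2 * (int \<tau> + int (length s))"
  let ?ops = "finite_ops x \<tau> s N"
  have valid: "valid_rates q (map snd ?ops)"
    using assms(1-3) by (rule valid_rates_finite_ops)
  have "eq_on_window R (process1 q x \<tau> s w) (run_swaps q ?ops w id)" for w
    using process1_eq_on_window by (rule eq_on_window_mono) (simp add: N_def)
  then have set1: "{w. process1 q x \<tau> s w \<in> C} = {w. run_swaps q ?ops w id \<in> C}"
    using local by blast
  have "eq_on_window R (inv (process2 q x \<tau> s w)) (inv (run_swaps q (rev ?ops) w id))" for w
    unfolding eq_on_window_def using inv_process2_eq_run_swaps by (simp add: N_def)
  then have set2: "{w. inv (process2 q x \<tau> s w) \<in> C} = {w. run_swaps q (rev ?ops) w id \<in> inv -` C}"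
    using local by blast
  have "measure unif_space {w. run_swaps q ?ops w id \<in> C} = measure_pmf.prob (swaps_right q (map snd ?ops) id) C"
    using distinct_finite_ops valid by (rule measure_run_swaps)
  also have "\<dots> = measure_pmf.prob (map_pmf inv (swaps_right q (map snd (rev ?ops)) id)) C"
    by (simp only: rev_map[symmetric] map_pmf_inv_swaps_right_id[OF valid])
  also have "\<dots> = measure_pmf.prob (swaps_right q (map snd (rev ?ops)) id) (inv -` C)"
    by (rule measure_map_pmf)
  also have "\<dots> = measure unif_space {w. run_swaps q (rev ?ops) w id \<in> inv -` C}"
  proof (rule measure_run_swaps[symmetric])
    show "distinct (map fst (rev ?ops))"
      using distinct_finite_ops by (simp add: rev_map[symmetric])
    show "valid_rates q (map snd (rev ?ops))"
      using valid by (simp add: valid_rates_def)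
  qed
  finally show ?thesis
    unfolding set1 set2 .
qed

lemma distr_process1_eq_distr_inv_process2:
  assumes "0 \<le> q" "q \<le> 1"
    and "\<And>z T. 1 \<le> T \<Longrightarrow> T \<le> \<tau> \<Longrightarrow> z mod 2 = int T mod 2 \<Longrightarrow> 0 \<le> x z T \<and> x z T \<le> 1"
  shows "distr unif_space conf_space (process1 q x \<tau> s) = distr unif_space conf_space (\<lambda>w. inv (process2 q x \<tau> s w))"
proof (rule measure_eqI_PiM_infinite[where I = UNIV and M = "\<lambda>_. count_space UNIV"])
  show "finite_measure (distr unif_space conf_space (process1 q x \<tau> s))"
    by (rule unif.finite_measure_distr[OF measurable_process1])
next
  fix J :: "int set" and A :: "int \<Rightarrow> int set"
  assume "finite J"
  let ?X = "prod_emb UNIV (\<lambda>_. count_space UNIV) J (Pi\<^sub>E J A)"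
  define C where "C = {\<eta>. \<forall>j \<in> J. \<eta> j \<in> A j}"
  have "eq_on_window (\<Sum>i\<in>J. \<bar>i\<bar>) \<eta> \<eta>' \<Longrightarrow> \<eta> \<in> C \<longleftrightarrow> \<eta>' \<in> C" for \<eta> \<eta>'
    using member_le_sum[of _ J abs] \<open>finite J\<close> by (auto simp: eq_on_window_def C_def)
  with assms have "measure unif_space {w. process1 q x \<tau> s w \<in> C} = measure unif_space {w. inv (process2 q x \<tau> s w) \<in> C}"
    by (rule measure_process1_eq_measure_inv_process2)
  moreover have "?X = C"
    by (auto simp: prod_emb_def C_def restrict_PiE_iff space_PiM)
  moreover have "?X \<in> sets conf_space"
    unfolding conf_space_def using \<open>finite J\<close> by (intro sets_PiM_I) auto
  ultimately show "emeasure (distr unif_space conf_space (process1 q x \<tau> s)) ?X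
      = emeasure (distr unif_space conf_space (\<lambda>w. inv (process2 q x \<tau> s w))) ?X"
    using measurable_process1 measurable_inv_process2
    by (simp add: emeasure_distr unif.emeasure_eq_measure vimage_def)
qed (simp_all add: conf_space_def)

theorem theorem3p2:
  fixes q :: real and \<tau> :: nat and x :: "int \<Rightarrow> nat \<Rightarrow> real" and s :: "int list"
  assumes "0 \<le> q" and "q \<le> 1"
    and "odd \<tau>"
    and "\<And>z T. 1 \<le> T \<Longrightarrow> T \<le> \<tau> \<Longrightarrow> z mod 2 = int T mod 2 \<Longrightarrow> 0 \<le> x z T \<and> x z T < 1"
  shows "(AE \<omega> in unif_space. bij (process1 q x \<tau> s \<omega>))
       \<and> (AE \<omega> in unif_space. bij (process2 q x \<tau> s \<omega>))
       \<and> (\<forall>A \<in> sets conf_space.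
            measure unif_space {\<omega> \<in> space unif_space. process1 q x \<tau> s \<omega> \<in> A}
          = measure unif_space {\<omega> \<in> space unif_space. bij (process2 q x \<tau> s \<omega>)
                                   \<and> inv (process2 q x \<tau> s \<omega>) \<in> A})"
proof -
  have "0 \<le> x z T \<and> x z T \<le> 1" if "1 \<le> T" "T \<le> \<tau>" "z mod 2 = int T mod 2" for z T
    using assms(4)[OF that] by simp
  with assms(1,2) have distr_eq:
    "distr unif_space conf_space (process1 q x \<tau> s) = distr unif_space conf_space (\<lambda>w. inv (process2 q x \<tau> s w))"
    by (rule distr_process1_eq_distr_inv_process2)
  have "measure unif_space {\<omega>. process1 q x \<tau> s \<omega> \<in> A} = measure unif_space {\<omega>. inv (process2 q x \<tau> s \<omega>) \<in> A}"
    if "A \<in> sets conf_space" for A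
    using arg_cong[OF distr_eq, of "\<lambda>M. measure M A"] that measurable_process1 measurable_inv_process2
    by (simp add: measure_distr vimage_def)
  then show ?thesis
    by (simp add: bij_process1 bij_process2)
qed

end
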